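(* Consider the quantized estimation system below, under the assumption that all partitioned observation subvectors $\{\mathbf{x}_{jl}\}$ are known to be independent and that there are only $W<\sum_j L_j$ distinct statistical models among them: the subvector indices using the $w$-th model $(\tilde{\mathscr{X}}_w,\tilde{\mathscr{F}}_w,\tilde{\mathscr{P}}_w^{\boldsymbol{\theta}})$ form group $\mathcal{A}_w$, which is split into $T_w$ disjoint nonempty subgroups $\mathcal{A}_w^{(t)}$ whose subvectors all use the same vector quantizer $\tilde\gamma_w^{(t)}$ with $\tilde R_w^{(t)}$ levels and regions $\{\tilde I_{wt}^{(r)}\}$. (i) Suppose the interior of $\boldsymbol{\Theta}\subset\mathbb{R}^{D_{\boldsymbol{\theta}}}$ is nonempty and every $q_j^{(\mathbf{s})}(\boldsymbol{\theta})$ is twice differentiable in $\boldsymbol{\theta}$ on $\boldsymbol{\Theta}$. Then for any $\boldsymbol{\theta}$, any quantization regions $\{\tilde I_{wt}^{(r)}\}$ and any statistical models $\{(\tilde{\mathscr{X}}_w,\tilde{\mathscr{F}}_w,\tilde{\mathscr{P}}_w^{\boldsymbol{\theta}})\}$, if $$D_{\boldsymbol{\theta}} > \lambda_{\text{Indep}}^{\text{ISM}}\big(\{\mathcal{A}_w^{(t)}\},\{\tilde R_w^{(t)}\}\big) := \sum_{w=1}^W\sum_{t=1}^{T_w}\big(\tilde R_w^{(t)}-1\big),$$ then the Fisher information matrix for estimating $\boldsymbol{\theta}$ is singular. (ii) Suppose the interior of $\boldsymbol{\Theta}$ is nonempty and every $q_j^{(\mathbf{s})}(\boldsymbol{\theta})$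 is continuous in $\boldsymbol{\theta}$. Then for any $\{\tilde I_{wt}^{(r)}\}$ and any $\{(\tilde{\mathscr{X}}_w,\tilde{\mathscr{F}}_w,\tilde{\mathscr{P}}_w^{\boldsymbol{\theta}})\}$, if the same inequality $D_{\boldsymbol{\theta}}>\lambda_{\text{Indep}}^{\text{ISM}}$ holds, the vector parameter space $\boldsymbol{\Theta}$ is not identifiable; moreover, every open subset $\mathcal{U}\subset\boldsymbol{\Theta}$ of $\mathbb{R}^{D_{\boldsymbol{\theta}}}$ contains infinitely many nonidentifiable vector parameter points.
   Context: System: $N$ sensors; sensor $j$ observes $\mathbf{x}_j$, independent across $j$, unknown $\boldsymbol{\theta}\in\boldsymbol{\Theta}\subset\mathbb{R}^{D_{\boldsymbol{\theta}}}$. $\mathbf{x}_j$ is partitioned into $L_j$ subvectors $\mathbf{x}_{jl}$, each quantized by an $R_{jl}$-level vector quantizer $\gamma_{jl}(\mathbf{x}_{jl})=\sum_r r\,\mathbb{1}\{\mathbf{x}_{jl}\in I_{jl}^{(r)}\}$ with disjoint covering regions; the superquantizer output $\mathbf{u}_j=\Gamma_j(\mathbf{x}_j)=[\gamma_{j1}(\mathbf{x}_{j1}),\dots,\gamma_{jL_j}(\mathbf{x}_{jL_j})]^T$ is sent error-free to a fusion center, which estimates $\boldsymbol{\theta}$ from $\mathbf{u}=[\mathbf{u}_1^T,\dots,\mathbf{u}_N^T]^T$. $q_j^{(\mathbf{s})}(\boldsymbol{\theta})=\mathscr{P}_j^{\boldsymbol{\theta}}(\Gamma_j(\mathbf{x}_j)=\mathbf{s})$,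 where $\mathscr{P}_j^{\boldsymbol{\theta}}$ is the law of $\mathbf{x}_j$. Fisher information matrix $\mathbf{J}(\boldsymbol{\theta})=\sum_j\sum_{\mathbf{s}}\frac{1}{q_j^{(\mathbf{s})}}\frac{\partial q_j^{(\mathbf{s})}}{\partial\boldsymbol{\theta}}\big[\frac{\partial q_j^{(\mathbf{s})}}{\partial\boldsymbol{\theta}}\big]^T$. Two distinct points are observationally equivalent if $\Pr(\mathbf{u}|\boldsymbol{\theta})=\Pr(\mathbf{u}|\boldsymbol{\theta}')$ for all $\mathbf{u}$; a point is identifiable if no other point is observationally equivalent to it; $\boldsymbol{\Theta}$ is identifiable if every point is. If indices of $\mathbf{x}_{j_1l_1}$ and $\mathbf{x}_{j_2l_2}$ lie in the same $\mathcal{A}_w^{(t)}$ then $\gamma_{j_1l_1}=\gamma_{j_2l_2}$. *)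

theory Defs
  imports "HOL-Probability.Probability"
begin

text \<open>Joint law of the observation x_j of sensor j: its L_j subvectors x_jl are
  independent, x_jl distributed according to model gw j l (product measure).
  x_j is represented as the function l \<mapsto> x_jl.\<close>
definition sensor_law ::
  "(nat \<Rightarrow> real^'d \<Rightarrow> 'x measure) \<Rightarrow> (nat \<Rightarrow> nat \<Rightarrow> nat) \<Rightarrow> (nat \<Rightarrow> nat)
    \<Rightarrow> nat \<Rightarrow> real^'d \<Rightarrow> (nat \<Rightarrow> 'x) measure" where
  "sensor_law P gw L j \<theta> = PiM {..<L j} (\<lambda>l. P (gw j l) \<theta>)"

text \<open>Superquantizer Gamma_j: subvector l of sensor j uses the quantizer
  of its subgroup (gw j l, gt j l).\<close>
definition superquantizer ::
  "(nat \<Rightarrow> nat \<Rightarrow> 'x \<Rightarrow> nat) \<Rightarrow> (nat \<Rightarrow> nat \<Rightarrow> nat) \<Rightarrow> (nat \<Rightarrow> nat \<Rightarrow> nat)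
    \<Rightarrow> (nat \<Rightarrow> nat) \<Rightarrow> nat \<Rightarrow> (nat \<Rightarrow> 'x) \<Rightarrow> (nat \<Rightarrow> nat)" where
  "superquantizer Q gw gt L j x = (\<lambda>l\<in>{..<L j}. Q (gw j l) (gt j l) (x l))"

definition qprob ::
  "(nat \<Rightarrow> real^'d \<Rightarrow> 'x measure) \<Rightarrow> (nat \<Rightarrow> nat \<Rightarrow> 'x \<Rightarrow> nat) \<Rightarrow> (nat \<Rightarrow> nat \<Rightarrow> nat)
    \<Rightarrow> (nat \<Rightarrow> nat \<Rightarrow> nat) \<Rightarrow> (nat \<Rightarrow> nat) \<Rightarrow> nat \<Rightarrow> (nat \<Rightarrow> nat) \<Rightarrow> real^'d \<Rightarrow> real" where
  "qprob P Q gw gt L j s \<theta> =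
     measure (sensor_law P gw L j \<theta>)
       {x \<in> space (sensor_law P gw L j \<theta>). superquantizer Q gw gt L j x = s}"

definition out_set ::
  "(nat \<Rightarrow> nat \<Rightarrow> nat) \<Rightarrow> (nat \<Rightarrow> nat \<Rightarrow> nat) \<Rightarrow> (nat \<Rightarrow> nat \<Rightarrow> nat) \<Rightarrow> (nat \<Rightarrow> nat)
    \<Rightarrow> nat \<Rightarrow> (nat \<Rightarrow> nat) set" where
  "out_set R gw gt L j = PiE {..<L j} (\<lambda>l. {1..R (gw j l) (gt j l)})"

definition grad :: "(real^'d \<Rightarrow> real) \<Rightarrow> real^'d \<Rightarrow> real^'d" where
  "grad f x = (\<chi> i. frechet_derivative f (at x) (axis i 1))"

definition fisher_info ::
  "nat \<Rightarrow> (nat \<Rightarrow> (nat \<Rightarrow> nat) set) \<Rightarrow> (nat \<Rightarrow> (nat \<Rightarrow> nat) \<Rightarrow> real^'d \<Rightarrow> real)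
    \<Rightarrow> real^'d \<Rightarrow> real^'d^'d" where
  "fisher_info N S q \<theta> =
     (\<Sum>j<N. \<Sum>s\<in>S j. (1 / q j s \<theta>) *\<^sub>R
        (\<chi> a b. grad (q j s) \<theta> $ a * grad (q j s) \<theta> $ b))"

text \<open>Pr(u | theta) = prod_j q_j^(u_j)(theta) (sensors independent).\<close>
definition obs_equiv ::
  "nat \<Rightarrow> (nat \<Rightarrow> (nat \<Rightarrow> nat) set) \<Rightarrow> (nat \<Rightarrow> (nat \<Rightarrow> nat) \<Rightarrow> real^'d \<Rightarrow> real)
    \<Rightarrow> real^'d \<Rightarrow> real^'d \<Rightarrow> bool" where
  "obs_equiv N S q \<theta> \<theta>' \<longleftrightarrow>
     (\<forall>u \<in> PiE {..<N} S. (\<Prod>j<N. q j (u j) \<theta>) = (\<Prod>j<N. q j (u j) \<theta>'))"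

definition identifiable_point ::
  "nat \<Rightarrow> (nat \<Rightarrow> (nat \<Rightarrow> nat) set) \<Rightarrow> (nat \<Rightarrow> (nat \<Rightarrow> nat) \<Rightarrow> real^'d \<Rightarrow> real)
    \<Rightarrow> (real^'d) set \<Rightarrow> real^'d \<Rightarrow> bool" where
  "identifiable_point N S q \<Theta> \<theta> \<longleftrightarrow> \<not> (\<exists>\<theta>'\<in>\<Theta>. \<theta>' \<noteq> \<theta> \<and> obs_equiv N S q \<theta> \<theta>')"

definition identifiable_set ::
  "nat \<Rightarrow> (nat \<Rightarrow> (nat \<Rightarrow> nat) set) \<Rightarrow> (nat \<Rightarrow> (nat \<Rightarrow> nat) \<Rightarrow> real^'d \<Rightarrow> real)
    \<Rightarrow> (real^'d) set \<Rightarrow> bool" where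
  "identifiable_set N S q \<Theta> \<longleftrightarrow> (\<forall>\<theta>\<in>\<Theta>. identifiable_point N S q \<Theta> \<theta>)"

definition twice_differentiable_on :: "(real^'d \<Rightarrow> real) \<Rightarrow> (real^'d) set \<Rightarrow> bool" where
  "twice_differentiable_on f S \<longleftrightarrow>
     (\<exists>g. (\<forall>x\<in>S. (f has_derivative (\<lambda>h. g x \<bullet> h)) (at x within S)) \<and>
          (\<forall>x\<in>S. g differentiable (at x within S)))"

definition lambda_ISM :: "nat \<Rightarrow> (nat \<Rightarrow> nat) \<Rightarrow> (nat \<Rightarrow> nat \<Rightarrow> nat) \<Rightarrow> nat" where
  "lambda_ISM W T R = (\<Sum>w<W. \<Sum>t<T w. (R w t - 1))"

end

theory Submission
  imports Defs
begin

text \<open>Each output probability q_j^(s) is a product of level probabilities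
  m_wt^(r)(\<theta>) = P(\<gamma>_wt(x) = r) of the subgroup quantizers. The levels of one
  quantizer have total probability one, so the distribution of u is a function
  of the \<lambda>_Indep^ISM "free" level probabilities with r < R_wt. Conversely every
  m_wt^(r) is a marginal of some q_j^(s) and so inherits its continuity or
  differentiability. With fewer free level probabilities than parameters,
  (i) some direction z \<noteq> 0 is annihilated by all their derivatives, hence by
  all gradients of the q_j^(s), and then J(\<theta>) z = 0; (ii) by invariance of
  dimension they cannot separate the points of any open set, and two points they
  do not separate are observationally equivalent.\<close>

lemma linear_eq_inner_axis:
  fixes f :: "real^'n \<Rightarrow> real"
  assumes "linear f"
  shows "f z = (\<chi> i. f (axis i 1)) \<bullet> z"
proof -
  have "f z = f (\<Sum>i\<in>UNIV. z $ i *s axis i 1)" by (simp only: basis_expansion)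
  also have "\<dots> = (\<Sum>i\<in>UNIV. z $ i * f (axis i 1))"
    using assms by (simp add: linear_sum linear_scale scalar_mult_eq_scaleR)
  also have "\<dots> = (\<chi> i. f (axis i 1)) \<bullet> z"
    by (simp add: inner_vec_def mult.commute)
  finally show ?thesis .
qed

lemma grad_inner:
  assumes "(f has_derivative D) (at x)"
  shows "grad f x \<bullet> z = D z"
  using linear_eq_inner_axis[OF has_derivative_linear[OF assms], of z]
  by (simp add: grad_def frechet_derivative_at[OF assms, symmetric])

lemma differentiable_at_interior_if_twice_differentiable_on:
  assumes "twice_differentiable_on f S" "x \<in> interior S"
  shows "f differentiable (at x)"
proof -
  obtain g where "(f has_derivative (\<lambda>h. g x \<bullet> h)) (at x within S)"
    using assms interior_subset unfolding twice_differentiable_on_def by blast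
  then show ?thesis
    using at_within_interior[OF assms(2)] by (auto simp: differentiable_def)
qed

lemma exists_nonzero_common_root_linear:
  fixes f :: "'k \<Rightarrow> real^'n \<Rightarrow> real"
  assumes "finite K" "card K < CARD('n)" "\<And>k. k \<in> K \<Longrightarrow> linear (f k)"
  obtains z where "z \<noteq> 0" "\<forall>k\<in>K. f k z = 0"
proof -
  define g where "g k = (\<chi> i. f k (axis i 1))" for k
  have "dim (g ` K) \<le> card (g ` K)"
    by (rule dim_le_card) (auto intro: span_base simp: assms(1))
  also have "\<dots> \<le> card K" using assms(1) by (rule card_image_le)
  finally have "dim (g ` K) < DIM(real^'n)" using assms(2) by simp
  then obtain z :: "real^'n" where z: "z \<noteq> 0" "\<And>y. y \<in> span (g ` K) \<Longrightarrow> orthogonal z y"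
    by (rule orthogonal_to_subspace_exists) blast
  show thesis
  proof (rule that[OF z(1)], intro ballI)
    fix k assume "k \<in> K"
    then have "orthogonal z (g k)" by (intro z(2) span_base imageI)
    then show "f k z = 0"
      using linear_eq_inner_axis[OF assms(3)[OF \<open>k \<in> K\<close>], of z]
      by (simp add: g_def orthogonal_def inner_commute)
  qed
qed

lemma continuous_family_not_separating:
  fixes f :: "'k \<Rightarrow> real^'n \<Rightarrow> real"
  assumes "finite K" "card K < CARD('n)" "\<And>k. k \<in> K \<Longrightarrow> continuous_on U (f k)"
    and "open U" "U \<noteq> {}"
  obtains a b where "a \<in> U" "b \<in> U" "a \<noteq> b" "\<forall>k\<in>K. f k a = f k b"
proof -
  obtain \<iota> :: "'k \<Rightarrow> 'n" where inj: "inj_on \<iota> K"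
    using card_le_inj[OF assms(1), of "UNIV :: 'n set"] assms(2) by auto
  define B where "B = (\<lambda>k. axis (\<iota> k) 1 :: real^'n) ` K"
  define \<psi> where "\<psi> x = (\<Sum>k\<in>K. f k x *\<^sub>R axis (\<iota> k) (1::real))" for x :: "real^'n"
  have \<psi>_component: "\<psi> x $ \<iota> k = f k x" if "k \<in> K" for x k
  proof -
    have "\<psi> x $ \<iota> k = (\<Sum>k'\<in>K. if k' = k then f k x else 0)"
      unfolding \<psi>_def sum_component
      by (rule sum.cong) (use inj that in \<open>auto simp: axis_def inj_on_def\<close>)
    then show ?thesis using assms(1) that by simp
  qed
  have "\<psi> x \<in> span B" for x
    unfolding \<psi>_def B_def by (intro span_sum span_scale span_base) auto
  moreover have "affine hull span B = span B"
    by (simp add: affine_hull_eq subspace_imp_affine)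
  ultimately have \<psi>_span: "\<psi> \<in> A \<rightarrow> affine hull span B" for A
    by (auto simp: hull_same)
  have cont\<psi>: "continuous_on U \<psi>"
    unfolding \<psi>_def by (intro continuous_on_sum continuous_on_scaleR continuous_on_const assms(3))
  have "dim B \<le> card B"
    by (rule dim_le_card') (simp add: B_def assms(1))
  also have "\<dots> \<le> card K"
    unfolding B_def using assms(1) by (rule card_image_le)
  finally have "aff_dim (span B) < CARD('n)"
    using assms(2) by (simp add: aff_dim_subspace)
  obtain x \<epsilon> where "\<epsilon> > 0" "ball x \<epsilon> \<subseteq> U"
    using assms(4,5) open_contains_ball by blast
  have "\<not> inj_on \<psi> (ball x \<epsilon>)"
  proof
    assume "inj_on \<psi> (ball x \<epsilon>)"
    then have "aff_dim (ball x \<epsilon>) \<le> aff_dim (span B)"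
      using continuous_on_subset[OF cont\<psi> \<open>ball x \<epsilon> \<subseteq> U\<close>] \<psi>_span
      by (intro invariance_of_dimension_convex_domain) auto
    then show False
      using \<open>\<epsilon> > 0\<close> \<open>aff_dim (span B) < CARD('n)\<close> by (simp add: aff_dim_open)
  qed
  then obtain a b where ab: "a \<in> ball x \<epsilon>" "b \<in> ball x \<epsilon>" "a \<noteq> b" "\<psi> a = \<psi> b"
    by (auto simp: inj_on_def)
  have "f k a = f k b" if "k \<in> K" for k
    using \<psi>_component[OF that] ab(4) by metis
  then show thesis
    using that ab \<open>ball x \<epsilon> \<subseteq> U\<close> by blast
qed

lemma matrix_vector_mult_sum_left:
  fixes A :: "'i \<Rightarrow> real^'n^'m"
  shows "(\<Sum>i\<in>I. A i) *v z = (\<Sum>i\<in>I. A i *v z)"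
proof (induction I rule: infinite_finite_induct)
  case (insert i I)
  then show ?case by (simp add: matrix_vector_mult_add_rdistrib)
qed (simp_all add: matrix_vector_mult_def vec_eq_iff)

lemma outer_product_mult_vector:
  fixes g z :: "real^'n"
  shows "(\<chi> a b. g $ a * g $ b) *v z = (g \<bullet> z) *\<^sub>R g"
  by (simp add: matrix_vector_mult_def inner_vec_def sum_distrib_left mult_ac vec_eq_iff)

lemma det_fisher_info_eq_0_if_grads_orthogonal:
  assumes "z \<noteq> 0" "\<And>j s. j < N \<Longrightarrow> s \<in> S j \<Longrightarrow> grad (q j s) \<theta> \<bullet> z = 0"
  shows "det (fisher_info N S q \<theta>) = 0"
proof -
  have "fisher_info N S q \<theta> *v z = 0"
    unfolding fisher_info_def matrix_vector_mult_sum_left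
    by (intro sum.neutral ballI)
       (simp add: matrix_vector_mult_sum_left scaleR_matrix_vector_assoc[symmetric]
         outer_product_mult_vector assms(2))
  then have "rank (fisher_info N S q \<theta>) \<noteq> CARD('a)"
    using assms(1) matrix_nonfull_linear_equations_eq by blast
  then show ?thesis
    using rank_bound[of "fisher_info N S q \<theta>"] by (simp add: det_eq_0_rank)
qed

lemma sum_prod_PiE_fixed_coord:
  fixes f :: "'a \<Rightarrow> 'b \<Rightarrow> real"
  assumes "finite I" "\<And>i. i \<in> I \<Longrightarrow> finite (A i)" "i\<^sub>0 \<in> I" "r \<in> A i\<^sub>0"
  shows "(\<Sum>s\<in>{s\<in>PiE I A. s i\<^sub>0 = r}. \<Prod>i\<in>I. f i (s i))
       = f i\<^sub>0 r * (\<Prod>i\<in>I - {i\<^sub>0}. \<Sum>a\<in>A i. f i a)"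
proof -
  have "{s\<in>PiE I A. s i\<^sub>0 = r} = PiE I (A(i\<^sub>0 := {r}))"
    using assms(3,4) by (auto simp: PiE_iff extensional_def split: if_splits)
  then have "(\<Sum>s\<in>{s\<in>PiE I A. s i\<^sub>0 = r}. \<Prod>i\<in>I. f i (s i))
           = (\<Prod>i\<in>I. \<Sum>a\<in>(A(i\<^sub>0 := {r})) i. f i a)"
    using assms(1,2) by (subst prod_sum_PiE) auto
  also have "\<dots> = (\<Sum>a\<in>{r}. f i\<^sub>0 a) * (\<Prod>i\<in>I - {i\<^sub>0}. \<Sum>a\<in>(A(i\<^sub>0 := {r})) i. f i a)"
    using assms(1,3) by (subst prod.remove) auto
  also have "(\<Prod>i\<in>I - {i\<^sub>0}. \<Sum>a\<in>(A(i\<^sub>0 := {r})) i. f i a) = (\<Prod>i\<in>I - {i\<^sub>0}. \<Sum>a\<in>A i. f i a)"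
    by (intro prod.cong) auto
  finally show ?thesis by simp
qed

text \<open>The last level of each subgroup quantizer is not free: its probability is
  one minus the others.\<close>
definition free_levels :: "nat \<Rightarrow> (nat \<Rightarrow> nat) \<Rightarrow> (nat \<Rightarrow> nat \<Rightarrow> nat) \<Rightarrow> (nat \<times> nat \<times> nat) set"
  where "free_levels W T R = (SIGMA w:{..<W}. SIGMA t:{..<T w}. {1..<R w t})"

lemma finite_free_levels: "finite (free_levels W T R)"
  by (simp add: free_levels_def)

lemma card_free_levels: "card (free_levels W T R) = lambda_ISM W T R"
  by (simp add: free_levels_def lambda_ISM_def card_SigmaI)

locale quantized_system =
  fixes N W :: nat
    and L :: "nat \<Rightarrow> nat"
    and T :: "nat \<Rightarrow> nat"
    and gw gt :: "nat \<Rightarrow> nat \<Rightarrow> nat"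
    and R :: "nat \<Rightarrow> nat \<Rightarrow> nat"
    and M :: "nat \<Rightarrow> 'x measure"
    and P :: "nat \<Rightarrow> real^'d \<Rightarrow> 'x measure"
    and Q :: "nat \<Rightarrow> nat \<Rightarrow> 'x \<Rightarrow> nat"
    and \<Theta> :: "(real^'d) set"
  assumes grp: "\<forall>j<N. \<forall>l<L j. gw j l < W \<and> gt j l < T (gw j l)"
    and subgrp_nonempty: "\<forall>w<W. \<forall>t<T w. \<exists>j<N. \<exists>l<L j. gw j l = w \<and> gt j l = t"
    and models_prob: "\<forall>w<W. \<forall>\<theta>\<in>\<Theta>. prob_space (P w \<theta>)"
    and models_sets: "\<forall>w<W. \<forall>\<theta>. sets (P w \<theta>) = sets (M w)"
    and quant_meas: "\<forall>w<W. \<forall>t<T w. Q w t \<in> measurable (M w) (count_space UNIV)"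
    and quant_range: "\<forall>w<W. \<forall>t<T w. \<forall>x\<in>space (M w). Q w t x \<in> {1..R w t}"
begin

abbreviation "q \<equiv> qprob P Q gw gt L"
abbreviation "S \<equiv> out_set R gw gt L"

lemma finite_out_set [simp]: "finite (S j)"
  by (simp add: out_set_def finite_PiE)

definition level_prob :: "nat \<Rightarrow> nat \<Rightarrow> nat \<Rightarrow> real^'d \<Rightarrow> real" where
  "level_prob w t r \<theta> = measure (P w \<theta>) {y \<in> space (P w \<theta>). Q w t y = r}"

lemma level_prob_nonneg: "0 \<le> level_prob w t r \<theta>"
  by (simp add: level_prob_def)

lemma quantizer_measurable:
  assumes "w < W" "t < T w"
  shows "Q w t \<in> measurable (P w \<theta>) (count_space UNIV)"
proof -
  have "sets (P w \<theta>) = sets (M w)" using models_sets assms by auto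
  then have "measurable (P w \<theta>) (count_space UNIV) = measurable (M w) (count_space UNIV)"
    by (rule measurable_cong_sets) simp
  then show ?thesis using quant_meas assms by auto
qed

lemma level_set_measurable:
  assumes "w < W" "t < T w"
  shows "{y \<in> space (P w \<theta>). Q w t y = r} \<in> sets (P w \<theta>)"
  using measurable_sets[OF quantizer_measurable[OF assms], of "{r}"]
  by (simp add: vimage_def Int_def conj_commute)

lemma sum_level_prob:
  assumes "\<theta> \<in> \<Theta>" "w < W" "t < T w"
  shows "(\<Sum>r\<in>{1..R w t}. level_prob w t r \<theta>) = 1"
proof -
  interpret prob_space "P w \<theta>" using models_prob assms by auto
  note Qm = quantizer_measurable[OF assms(2,3), of \<theta>]
  let ?D = "distr (P w \<theta>) (count_space UNIV) (Q w t)"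
  interpret D: prob_space ?D by (rule prob_space_distr[OF Qm])
  have level_distr: "level_prob w t r \<theta> = measure ?D {r}" for r
  proof -
    have "Q w t -` {r} \<inter> space (P w \<theta>) = {y \<in> space (P w \<theta>). Q w t y = r}" by blast
    then show ?thesis
      unfolding level_prob_def by (simp only: measure_distr[OF Qm] sets_count_space UNIV_I Pow_UNIV)
  qed
  have "space (P w \<theta>) = space (M w)"
    by (rule sets_eq_imp_space_eq) (use models_sets assms in auto)
  then have range: "Q w t -` {1..R w t} \<inter> space (P w \<theta>) = space (P w \<theta>)"
    using quant_range assms by auto
  have "(\<Sum>r\<in>{1..R w t}. level_prob w t r \<theta>) = measure ?D {1..R w t}"
    unfolding level_distr
    by (rule measure_eq_sum_singleton[symmetric]) (simp_all add: D.emeasure_finite)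
  also have "\<dots> = 1"
    using measure_distr[OF Qm, of "{1..R w t}"] range by (simp add: prob_space)
  finally show ?thesis .
qed

lemma qprob_eq_prod_level_prob:
  assumes "\<theta> \<in> \<Theta>" "j < N" "s \<in> S j"
  shows "q j s \<theta> = (\<Prod>l<L j. level_prob (gw j l) (gt j l) (s l) \<theta>)"
proof -
  let ?I = "{..<L j}"
  let ?E = "\<lambda>l. {y \<in> space (P (gw j l) \<theta>). Q (gw j l) (gt j l) y = s l}"
  define M' where "M' l = (if l \<in> ?I then P (gw j l) \<theta> else count_space {})" for l
  have prob: "prob_space (P (gw j l) \<theta>)" if "l \<in> ?I" for l
    using models_prob grp assms that by auto
  interpret product_sigma_finite M'
    unfolding product_sigma_finite_def M'_def
    using prob by (auto intro: prob_space_imp_sigma_finite sigma_finite_measure_count_space_finite)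
  have law: "sensor_law P gw L j \<theta> = PiM ?I M'"
    unfolding sensor_law_def M'_def by (rule PiM_cong) auto
  have "superquantizer Q gw gt L j x = s \<longleftrightarrow> (\<forall>l\<in>?I. Q (gw j l) (gt j l) (x l) = s l)" for x
    using assms(3) unfolding superquantizer_def out_set_def
    by (auto simp: fun_eq_iff PiE_iff extensional_def)
  then have event: "{x \<in> space (sensor_law P gw L j \<theta>). superquantizer Q gw gt L j x = s} = PiE ?I ?E"
    unfolding law space_PiM by (auto simp: PiE_iff extensional_def M'_def)
  have "q j s \<theta> = measure (PiM ?I M') (PiE ?I ?E)"
    unfolding qprob_def event by (simp add: law)
  also have "\<dots> = enn2real (\<Prod>l\<in>?I. emeasure (P (gw j l) \<theta>) (?E l))"
    unfolding measure_def
    by (subst emeasure_PiM) (use level_set_measurable grp assms in \<open>auto simp: M'_def\<close>)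
  also have "\<dots> = enn2real (\<Prod>l\<in>?I. ennreal (level_prob (gw j l) (gt j l) (s l) \<theta>))"
    by (intro arg_cong[where f=enn2real] prod.cong refl)
       (simp add: level_prob_def finite_measure.emeasure_eq_measure[OF prob_space.axioms(1)[OF prob]])
  also have "\<dots> = (\<Prod>l\<in>?I. level_prob (gw j l) (gt j l) (s l) \<theta>)"
    by (simp add: prod_ennreal level_prob_nonneg prod_nonneg)
  finally show ?thesis .
qed

lemma level_prob_eq_marginal:
  assumes "w < W" "t < T w" "r \<in> {1..R w t}"
  obtains j l where "j < N"
    "\<And>\<theta>. \<theta> \<in> \<Theta> \<Longrightarrow> level_prob w t r \<theta> = (\<Sum>s\<in>{s\<in>S j. s l = r}. q j s \<theta>)"
proof -
  obtain j l where jl: "j < N" "l < L j" "gw j l = w" "gt j l = t"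
    using subgrp_nonempty assms by blast
  have "level_prob w t r \<theta> = (\<Sum>s\<in>{s\<in>S j. s l = r}. q j s \<theta>)" if "\<theta> \<in> \<Theta>" for \<theta>
  proof -
    have "(\<Sum>s\<in>{s\<in>S j. s l = r}. q j s \<theta>)
        = (\<Sum>s\<in>{s\<in>S j. s l = r}. \<Prod>l'<L j. level_prob (gw j l') (gt j l') (s l') \<theta>)"
      using qprob_eq_prod_level_prob[OF that jl(1)] by (intro sum.cong) auto
    also have "\<dots> = level_prob w t r \<theta> *
        (\<Prod>l'\<in>{..<L j} - {l}. \<Sum>r'\<in>{1..R (gw j l') (gt j l')}. level_prob (gw j l') (gt j l') r' \<theta>)"
      unfolding out_set_def using jl assms(3) by (subst sum_prod_PiE_fixed_coord) auto
    also have "\<dots> = level_prob w t r \<theta>"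
      using sum_level_prob[OF that] grp jl(1) by (simp add: prod.neutral)
    finally show ?thesis by simp
  qed
  with jl(1) show thesis by (rule that)
qed

lemma continuous_on_level_prob:
  assumes "\<forall>j<N. \<forall>s\<in>S j. continuous_on \<Theta> (q j s)"
    and "w < W" "t < T w" "r \<in> {1..R w t}"
  shows "continuous_on \<Theta> (level_prob w t r)"
proof -
  obtain j l where "j < N"
    and marginal: "\<And>\<theta>. \<theta> \<in> \<Theta> \<Longrightarrow> level_prob w t r \<theta> = (\<Sum>s\<in>{s\<in>S j. s l = r}. q j s \<theta>)"
    by (rule level_prob_eq_marginal[OF assms(2-4)]) blast
  have "continuous_on \<Theta> (\<lambda>\<theta>. \<Sum>s\<in>{s\<in>S j. s l = r}. q j s \<theta>)"
    using assms(1) \<open>j < N\<close> by (intro continuous_on_sum) auto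
  then show ?thesis
    by (rule continuous_on_eq) (simp add: marginal)
qed

lemma level_prob_differentiable:
  assumes "\<forall>j<N. \<forall>s\<in>S j. twice_differentiable_on (q j s) \<Theta>"
    and "\<theta> \<in> interior \<Theta>" "w < W" "t < T w" "r \<in> {1..R w t}"
  shows "level_prob w t r differentiable (at \<theta>)"
proof -
  obtain j l where "j < N"
    and marginal: "\<And>\<theta>. \<theta> \<in> \<Theta> \<Longrightarrow> level_prob w t r \<theta> = (\<Sum>s\<in>{s\<in>S j. s l = r}. q j s \<theta>)"
    by (rule level_prob_eq_marginal[OF assms(3-5)]) blast
  have "q j s differentiable (at \<theta>)" if "s \<in> S j" for s
    using assms(1,2) \<open>j < N\<close> that
    by (intro differentiable_at_interior_if_twice_differentiable_on) auto
  then have "(\<lambda>\<theta>. \<Sum>s\<in>{s\<in>S j. s l = r}. q j s \<theta>) differentiable (at \<theta>)"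
    by (intro differentiable_sum) auto
  then obtain D where "((\<lambda>\<theta>. \<Sum>s\<in>{s\<in>S j. s l = r}. q j s \<theta>) has_derivative D) (at \<theta>)"
    by (auto simp: differentiable_def)
  then have "(level_prob w t r has_derivative D) (at \<theta>)"
    by (rule has_derivative_transform_within_open[OF _ open_interior assms(2)])
       (simp add: marginal interior_subset[THEN subsetD])
  then show ?thesis by (auto simp: differentiable_def)
qed

lemma sum_level_prob_derivative:
  assumes "\<theta> \<in> interior \<Theta>" "w < W" "t < T w"
    and "\<And>r. r \<in> {1..R w t} \<Longrightarrow> (level_prob w t r has_derivative D r) (at \<theta>)"
  shows "(\<Sum>r\<in>{1..R w t}. D r h) = 0"
proof -
  have "((\<lambda>\<theta>. \<Sum>r\<in>{1..R w t}. level_prob w t r \<theta>) has_derivative (\<lambda>h. \<Sum>r\<in>{1..R w t}. D r h)) (at \<theta>)"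
    using assms(4) by (rule has_derivative_sum)
  then have "((\<lambda>_. 1::real) has_derivative (\<lambda>h. \<Sum>r\<in>{1..R w t}. D r h)) (at \<theta>)"
    by (rule has_derivative_transform_within_open[OF _ open_interior assms(1)])
       (metis sum_level_prob assms(2,3) interior_subset subsetD)
  then have "(\<lambda>h. \<Sum>r\<in>{1..R w t}. D r h) = (\<lambda>h. 0)"
    by (rule has_derivative_unique) simp
  then show ?thesis by metis
qed

lemma qprob_has_derivative:
  assumes "\<theta> \<in> interior \<Theta>" "j < N" "s \<in> S j"
    and "\<And>l. l < L j \<Longrightarrow> (level_prob (gw j l) (gt j l) (s l) has_derivative D l) (at \<theta>)"
  shows "(q j s has_derivative (\<lambda>h. \<Sum>l<L j. D l h *
            (\<Prod>l'\<in>{..<L j} - {l}. level_prob (gw j l') (gt j l') (s l') \<theta>))) (at \<theta>)"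
proof (rule has_derivative_transform_within_open[OF _ open_interior assms(1)])
  show "((\<lambda>\<theta>. \<Prod>l<L j. level_prob (gw j l) (gt j l) (s l) \<theta>) has_derivative
      (\<lambda>h. \<Sum>l<L j. D l h * (\<Prod>l'\<in>{..<L j} - {l}. level_prob (gw j l') (gt j l') (s l') \<theta>))) (at \<theta>)"
    using assms(4) by (intro has_derivative_prod) auto
qed (use assms(2,3) in \<open>auto simp: qprob_eq_prod_level_prob dest: interior_subset[THEN subsetD]\<close>)

lemma obs_equiv_if_free_levels_eq:
  assumes "\<theta> \<in> \<Theta>" "\<theta>' \<in> \<Theta>"
    and free: "\<And>w t r. (w, t, r) \<in> free_levels W T R \<Longrightarrow> level_prob w t r \<theta> = level_prob w t r \<theta>'"
  shows "obs_equiv N S q \<theta> \<theta>'"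
proof -
  have levels: "level_prob w t r \<theta> = level_prob w t r \<theta>'"
    if "w < W" "t < T w" "r \<in> {1..R w t}" for w t r
  proof (cases "r < R w t")
    case True
    then show ?thesis using free that by (auto simp: free_levels_def)
  next
    case False
    then have "r = R w t" using that by simp
    moreover have "(\<Sum>r\<in>{1..<R w t}. level_prob w t r \<theta>) = (\<Sum>r\<in>{1..<R w t}. level_prob w t r \<theta>')"
      using free that by (intro sum.cong) (auto simp: free_levels_def)
    ultimately show ?thesis
      using sum_level_prob[OF assms(1) that(1,2)] sum_level_prob[OF assms(2) that(1,2)] that
      by (simp add: sum.last_plus)
  qed
  have "q j s \<theta> = q j s \<theta>'" if j: "j < N" and s: "s \<in> S j" for j s
  proof -
    have "level_prob (gw j l) (gt j l) (s l) \<theta> = level_prob (gw j l) (gt j l) (s l) \<theta>'"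
      if "l < L j" for l
      using levels grp j s that by (simp add: out_set_def PiE_iff)
    then show ?thesis by (simp add: qprob_eq_prod_level_prob assms(1,2) j s)
  qed
  then show ?thesis
    unfolding obs_equiv_def by (auto simp: PiE_iff intro!: prod.cong)
qed

lemma det_fisher_info_eq_0_at_interior:
  assumes diff: "\<forall>j<N. \<forall>s\<in>S j. twice_differentiable_on (q j s) \<Theta>"
    and dim: "lambda_ISM W T R < CARD('d)"
    and \<theta>: "\<theta> \<in> interior \<Theta>"
  shows "det (fisher_info N S q \<theta>) = 0"
proof -
  define D where "D w t r = frechet_derivative (level_prob w t r) (at \<theta>)" for w t r
  have D: "(level_prob w t r has_derivative D w t r) (at \<theta>)"
    if "w < W" "t < T w" "r \<in> {1..R w t}" for w t r
    using level_prob_differentiable[OF diff \<theta> that] by (simp add: D_def frechet_derivative_works)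
  have few: "card (free_levels W T R) < CARD('d)"
    using dim by (simp add: card_free_levels)
  have "linear ((\<lambda>(w, t, r). D w t r) k)" if "k \<in> free_levels W T R" for k
    using that by (auto simp: free_levels_def intro!: has_derivative_linear[OF D])
  then obtain z where "z \<noteq> 0" and z_free: "\<forall>k\<in>free_levels W T R. (\<lambda>(w, t, r). D w t r) k z = 0"
    by (rule exists_nonzero_common_root_linear[OF finite_free_levels few]) blast
  have Dz: "D w t r z = 0" if "w < W" "t < T w" "r \<in> {1..R w t}" for w t r
  proof (cases "r < R w t")
    case True
    then show ?thesis using z_free that by (auto simp: free_levels_def)
  next
    case False
    then have "r = R w t" using that by simp
    moreover have "(\<Sum>r\<in>{1..<R w t}. D w t r z) = 0"
      using z_free that by (intro sum.neutral) (auto simp: free_levels_def)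
    ultimately show ?thesis
      using sum_level_prob_derivative[OF \<theta> that(1,2) D[OF that(1,2)], of z] that
      by (simp add: sum.last_plus)
  qed
  have "grad (q j s) \<theta> \<bullet> z = 0" if "j < N" "s \<in> S j" for j s
  proof -
    have levels: "gw j l < W" "gt j l < T (gw j l)" "s l \<in> {1..R (gw j l) (gt j l)}"
      if "l < L j" for l
      using grp \<open>j < N\<close> \<open>s \<in> S j\<close> that by (auto simp: out_set_def PiE_iff)
    show ?thesis
      using grad_inner[OF qprob_has_derivative[OF \<theta> that D]] levels Dz by simp
  qed
  then show ?thesis by (rule det_fisher_info_eq_0_if_grads_orthogonal[OF \<open>z \<noteq> 0\<close>])
qed

lemma infinite_nonidentifiable_in_open:
  assumes cont: "\<forall>j<N. \<forall>s\<in>S j. continuous_on \<Theta> (q j s)"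
    and dim: "lambda_ISM W T R < CARD('d)"
    and U: "open U" "U \<noteq> {}" "U \<subseteq> \<Theta>"
  shows "infinite {\<theta>\<in>U. \<not> identifiable_point N S q \<Theta> \<theta>}" (is "infinite ?F")
proof
  assume "finite ?F"
  then have open_rest: "open (U - ?F)"
    by (intro open_Diff[OF U(1)] finite_imp_closed)
  have rest_nonempty: "U - ?F \<noteq> {}"
  proof
    assume "U - ?F = {}"
    then have "finite U"
      using finite_subset[OF _ \<open>finite ?F\<close>] by (simp add: Diff_eq_empty_iff)
    then show False using finite_imp_not_open U(1,2) by blast
  qed
  have few: "card (free_levels W T R) < CARD('d)"
    using dim by (simp add: card_free_levels)
  have rest_sub: "U - ?F \<subseteq> \<Theta>" using U(3) by blast
  have "continuous_on (U - ?F) ((\<lambda>(w, t, r). level_prob w t r) k)"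
    if "k \<in> free_levels W T R" for k
    using that
    by (auto simp: free_levels_def intro!: continuous_on_subset[OF continuous_on_level_prob[OF cont] rest_sub])
  then obtain a b where ab: "a \<in> U - ?F" "b \<in> U - ?F" "a \<noteq> b"
    and free: "\<forall>k\<in>free_levels W T R. (\<lambda>(w, t, r). level_prob w t r) k a = (\<lambda>(w, t, r). level_prob w t r) k b"
    by (rule continuous_family_not_separating[OF finite_free_levels few _ open_rest rest_nonempty]) blast
  have "obs_equiv N S q a b"
  proof (rule obs_equiv_if_free_levels_eq)
    show "a \<in> \<Theta>" "b \<in> \<Theta>" using ab(1,2) rest_sub by blast+
    show "level_prob w t r a = level_prob w t r b" if "(w, t, r) \<in> free_levels W T R" for w t r
      using bspec[OF free that] by simp
  qed
  moreover have "b \<in> \<Theta>" "b \<noteq> a" using ab(2,3) rest_sub by auto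
  ultimately have "\<not> identifiable_point N S q \<Theta> a"
    unfolding identifiable_point_def by blast
  then show False
    using ab(1) by simp
qed

end

theorem theorem5:
  fixes N W :: nat
    and L :: "nat \<Rightarrow> nat"
    and T :: "nat \<Rightarrow> nat"
    and gw gt :: "nat \<Rightarrow> nat \<Rightarrow> nat"
    and R :: "nat \<Rightarrow> nat \<Rightarrow> nat"
    and M :: "nat \<Rightarrow> 'x measure"
    and P :: "nat \<Rightarrow> real^'d \<Rightarrow> 'x measure"
    and Q :: "nat \<Rightarrow> nat \<Rightarrow> 'x \<Rightarrow> nat"
    and \<Theta> :: "(real^'d) set"
  assumes W_lt: "W < (\<Sum>j<N. L j)"
    and T_pos: "\<forall>w<W. 0 < T w"
    and grp: "\<forall>j<N. \<forall>l<L j. gw j l < W \<and> gt j l < T (gw j l)"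
    and subgrp_nonempty: "\<forall>w<W. \<forall>t<T w. \<exists>j<N. \<exists>l<L j. gw j l = w \<and> gt j l = t"
    and models_prob: "\<forall>w<W. \<forall>\<theta>\<in>\<Theta>. prob_space (P w \<theta>)"
    and models_sets: "\<forall>w<W. \<forall>\<theta>. sets (P w \<theta>) = sets (M w)"
    and quant_meas: "\<forall>w<W. \<forall>t<T w. Q w t \<in> measurable (M w) (count_space UNIV)"
    and quant_range: "\<forall>w<W. \<forall>t<T w. \<forall>x\<in>space (M w). Q w t x \<in> {1..R w t}"
    and int_ne: "interior \<Theta> \<noteq> {}"
    and dim: "CARD('d) > lambda_ISM W T R"
  shows
    "((\<forall>j<N. \<forall>s\<in>out_set R gw gt L j.
          twice_differentiable_on (qprob P Q gw gt L j s) \<Theta>)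
      \<longrightarrow> (\<forall>\<theta>\<in>interior \<Theta>.
             det (fisher_info N (out_set R gw gt L) (qprob P Q gw gt L) \<theta>) = 0))
   \<and> ((\<forall>j<N. \<forall>s\<in>out_set R gw gt L j. continuous_on \<Theta> (qprob P Q gw gt L j s))
      \<longrightarrow> (\<not> identifiable_set N (out_set R gw gt L) (qprob P Q gw gt L) \<Theta>
           \<and> (\<forall>U. open U \<and> U \<noteq> {} \<and> U \<subseteq> \<Theta> \<longrightarrow>
                 infinite {\<theta>\<in>U. \<not> identifiable_point N (out_set R gw gt L)
                                      (qprob P Q gw gt L) \<Theta> \<theta>})))"
proof -
  interpret quantized_system N W L T gw gt R M P Q \<Theta>
    using grp subgrp_nonempty models_prob models_sets quant_meas quant_range
    by unfold_locales
  have "\<not> identifiable_set N S q \<Theta>"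
    if "\<forall>j<N. \<forall>s\<in>S j. continuous_on \<Theta> (q j s)"
  proof -
    have "infinite {\<theta>\<in>interior \<Theta>. \<not> identifiable_point N S q \<Theta> \<theta>}"
      using infinite_nonidentifiable_in_open[OF that dim] int_ne interior_subset by blast
    then show ?thesis
      unfolding identifiable_set_def using interior_subset not_finite_existsD by blast
  qed
  then show ?thesis
    using det_fisher_info_eq_0_at_interior infinite_nonidentifiable_in_open dim by blast
qed

end
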